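(* For all types $\sigma,\tau$ (both in $\mathcal{T}_D$ or both in $\mathcal{T}_C$): if $\sigma\le\tau$ then $[\![\sigma]\!]\subseteq[\![\tau]\!]$.
   Context: $\lambda\mu$-calculus (Parigot). Terms $M,N ::= x \mid \lambda x.M \mid MN \mid \mu\alpha.[\beta]M$ over disjoint denumerable sets of term variables and names. Structural substitution $T[\alpha\Leftarrow L]$ replaces every subterm $[\alpha]N$ of $T$ by $[\alpha]N'L$ where $N'=N[\alpha\Leftarrow L]$ (recursively). Reduction is the compatible closure of $(\lambda x.M)N\to M[N/x]$ (capture-avoiding) and $(\mu\beta.[\gamma]M)N\to\mu\beta.(([\gamma]M)[\beta\Leftarrow N])$. $\mathcal{SN}$ is the set of terms with no infinite reduction sequence. A stack is a finite (possibly empty) sequence $\vec L=L_1:\cdots:L_k$ of terms, and $M\vec L$ denotes $ML_1\cdots L_k$; $\mathcal{SN}^*$ is the set of stacks of terms in $\mathcal{SN}$. Types: with constant $\nu$ and symbol $\omega$ (not itself a type), $\mathcal{T}_D:\ \delta ::= \nu \mid \omega\to\nu \mid \kappa\to\nu \mid \delta\wedge\delta$; $\mathcal{T}_C:\ \kappa ::= \delta\times\omega \mid \delta\times\kappa \mid \kappa\wedge\kappa$ ($\times$ right-associative). $\le$ is the least preorder on $\mathcal{T}_D$ and on $\mathcal{T}_C$ such that: $\sigma\wedge\tau\le\sigma$; $\sigma\wedge\tau\le\tau$; $\nu\le\omega\to\nu$; $\omega\to\nu\le\nu$; $\delta_1\times\delta_2\times\omega\le\delta_1\times\omega$; $(\delta_1\times\omega)\wedge(\delta_2\times\kappa)\le(\delta_1\wedge\delta_2)\times\kappa$;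 $(\delta_1\times\kappa_1)\wedge(\delta_2\times\kappa_2)\le(\delta_1\wedge\delta_2)\times(\kappa_1\wedge\kappa_2)$; $\delta_1\le\delta_2\Rightarrow\delta_1\times\omega\le\delta_2\times\omega$; $\delta_1\le\delta_2,\kappa_1\le\kappa_2\Rightarrow\delta_1\times\kappa_1\le\delta_2\times\kappa_2$; $\sigma\le\tau_1,\sigma\le\tau_2\Rightarrow\sigma\le\tau_1\wedge\tau_2$; $\kappa_2\le\kappa_1\Rightarrow\kappa_1\to\nu\le\kappa_2\to\nu$. Interpretation: $[\![\nu]\!]=[\![\omega\to\nu]\!]=\mathcal{SN}$; $[\![\kappa\to\nu]\!]=\{M\mid \forall\vec L\in[\![\kappa]\!].\ M\vec L\in\mathcal{SN}\}$; $[\![\delta\times\omega]\!]=\{N:\vec L\mid N\in[\![\delta]\!],\vec L\in\mathcal{SN}^*\}$; $[\![\delta\times\kappa]\!]=\{N:\vec L\mid N\in[\![\delta]\!],\vec L\in[\![\kappa]\!]\}$; $[\![\sigma\wedge\tau]\!]=[\![\sigma]\!]\cap[\![\tau]\!]$. *)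

theory Defs
  imports Main
begin

text \<open>Mu b M represents mu alpha.[beta]M, where the bound name alpha has name index 0
inside, and b is the (de Bruijn) name index of beta. Lam binds term variable index 0.
Term variables and names live in separate index spaces.\<close>

datatype trm = Var nat | Lam trm | App trm trm | Mu nat trm

primrec liftT :: "nat \<Rightarrow> trm \<Rightarrow> trm" where
  "liftT k (Var x) = (if x < k then Var x else Var (Suc x))"
| "liftT k (Lam M) = Lam (liftT (Suc k) M)"
| "liftT k (App M N) = App (liftT k M) (liftT k N)"
| "liftT k (Mu b M) = Mu b (liftT k M)"

primrec liftN :: "nat \<Rightarrow> trm \<Rightarrow> trm" where
  "liftN k (Var x) = Var x"
| "liftN k (Lam M) = Lam (liftN k M)"
| "liftN k (App M N) = App (liftN k M) (liftN k N)"
| "liftN k (Mu b M) = Mu (if b < k then b else Suc b) (liftN (Suc k) M)"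

primrec substT :: "nat \<Rightarrow> trm \<Rightarrow> trm \<Rightarrow> trm" where
  "substT k N (Var x) = (if x = k then N else if k < x then Var (x - 1) else Var x)"
| "substT k N (Lam M) = Lam (substT (Suc k) (liftT 0 N) M)"
| "substT k N (App M1 M2) = App (substT k N M1) (substT k N M2)"
| "substT k N (Mu b M) = Mu b (substT k (liftN 0 N) M)"

text \<open>Structural substitution T[k <= L]: every [k]N becomes [k](N' L).\<close>
primrec sstruct :: "nat \<Rightarrow> trm \<Rightarrow> trm \<Rightarrow> trm" where
  "sstruct k L (Var x) = Var x"
| "sstruct k L (Lam M) = Lam (sstruct k (liftT 0 L) M)"
| "sstruct k L (App M1 M2) = App (sstruct k L M1) (sstruct k L M2)"
| "sstruct k L (Mu b M) =
     Mu b (if b = Suc k then App (sstruct (Suc k) (liftN 0 L) M) (liftN 0 L)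
           else sstruct (Suc k) (liftN 0 L) M)"

inductive red :: "trm \<Rightarrow> trm \<Rightarrow> bool" where
  beta: "red (App (Lam M) N) (substT 0 N M)"
| mu: "red (App (Mu b M) N)
          (Mu b (if b = 0 then App (sstruct 0 (liftN 0 N) M) (liftN 0 N)
                 else sstruct 0 (liftN 0 N) M))"
| lam: "red M M' \<Longrightarrow> red (Lam M) (Lam M')"
| appL: "red M M' \<Longrightarrow> red (App M N) (App M' N)"
| appR: "red N N' \<Longrightarrow> red (App M N) (App M N')"
| muC: "red M M' \<Longrightarrow> red (Mu b M) (Mu b M')"

definition SN :: "trm set" where
  "SN = {M. \<not> (\<exists>f. f 0 = M \<and> (\<forall>i. red (f i) (f (Suc i))))}"

text \<open>Stacks are lists; apps M [L1,...,Lk] = M L1 ... Lk.\<close>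
definition apps :: "trm \<Rightarrow> trm list \<Rightarrow> trm" where
  "apps M Ls = foldl App M Ls"

definition SNstar :: "trm list set" where
  "SNstar = {Ls. set Ls \<subseteq> SN}"

text \<open>D: delta ::= nu | omega->nu | kappa->nu | delta /\ delta;
      C: kappa ::= delta x omega | delta x kappa | kappa /\ kappa.\<close>
datatype tD = Nu | OmegaArr | KArr tC | DAnd tD tD
     and tC = TimesOm tD | Times tD tC | CAnd tC tC

inductive leD :: "tD \<Rightarrow> tD \<Rightarrow> bool"
      and leC :: "tC \<Rightarrow> tC \<Rightarrow> bool" where
  D_refl: "leD s s"
| D_trans: "leD s t \<Longrightarrow> leD t u \<Longrightarrow> leD s u"
| D_andE1: "leD (DAnd s t) s"
| D_andE2: "leD (DAnd s t) t"
| D_nu_om: "leD Nu OmegaArr"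
| D_om_nu: "leD OmegaArr Nu"
| D_andI: "leD s t1 \<Longrightarrow> leD s t2 \<Longrightarrow> leD s (DAnd t1 t2)"
| D_arr: "leC k2 k1 \<Longrightarrow> leD (KArr k1) (KArr k2)"
| C_refl: "leC s s"
| C_trans: "leC s t \<Longrightarrow> leC t u \<Longrightarrow> leC s u"
| C_andE1: "leC (CAnd s t) s"
| C_andE2: "leC (CAnd s t) t"
| C_proj: "leC (Times d1 (TimesOm d2)) (TimesOm d1)"
| C_and_om: "leC (CAnd (TimesOm d1) (Times d2 k)) (Times (DAnd d1 d2) k)"
| C_and_k: "leC (CAnd (Times d1 k1) (Times d2 k2)) (Times (DAnd d1 d2) (CAnd k1 k2))"
| C_mono_om: "leD d1 d2 \<Longrightarrow> leC (TimesOm d1) (TimesOm d2)"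
| C_mono: "leD d1 d2 \<Longrightarrow> leC k1 k2 \<Longrightarrow> leC (Times d1 k1) (Times d2 k2)"
| C_andI: "leC s t1 \<Longrightarrow> leC s t2 \<Longrightarrow> leC s (CAnd t1 t2)"

primrec interpD :: "tD \<Rightarrow> trm set"
    and interpC :: "tC \<Rightarrow> trm list set" where
  "interpD Nu = SN"
| "interpD OmegaArr = SN"
| "interpD (KArr k) = {M. \<forall>Ls \<in> interpC k. apps M Ls \<in> SN}"
| "interpD (DAnd s t) = interpD s \<inter> interpD t"
| "interpC (TimesOm d) = {N # Ls | N Ls. N \<in> interpD d \<and> Ls \<in> SNstar}"
| "interpC (Times d k) = {N # Ls | N Ls. N \<in> interpD d \<and> Ls \<in> interpC k}"
| "interpC (CAnd s t) = interpC s \<inter> interpC t"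

end

theory Submission
  imports Defs
begin

text \<open>Every rule is
immediate from the interpretation except the projection
\<open>\<delta>\<^sub>1 \<times> \<delta>\<^sub>2 \<times> \<omega> \<le> \<delta>\<^sub>1 \<times> \<omega>\<close>, which needs \<open>\<lbrakk>\<delta>\<rbrakk> \<subseteq> SN\<close> for every \<open>\<delta>\<close>.
For \<open>\<kappa> \<rightarrow> \<nu>\<close> this holds because \<open>M L\<^sub>1 \<dots> L\<^sub>n \<in> SN\<close> implies \<open>M \<in> SN\<close>, provided
\<open>\<lbrakk>\<kappa>\<rbrakk>\<close> contains some stack. Stacks of variables serve as witnesses: a variable
applied to strongly normalising arguments is strongly normalising, so variables
inhabit every \<open>\<lbrakk>\<delta>\<rbrakk>\<close>. Since \<open>\<lbrakk>\<kappa>\<^sub>1 \<and> \<kappa>\<^sub>2\<rbrakk>\<close> needs a stack common to both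
components, the induction shows that all sufficiently long stacks of variables
belong to \<open>\<lbrakk>\<kappa>\<rbrakk>\<close>.\<close>

lemma termip_iff_no_infinite_chain:
  "termip r x \<longleftrightarrow> \<not> (\<exists>f. f 0 = x \<and> (\<forall>i. r (f i) (f (Suc i))))"
proof
  assume "termip r x"
  then show "\<not> (\<exists>f. f 0 = x \<and> (\<forall>i. r (f i) (f (Suc i))))"
  proof (induction rule: accp.induct)
    case (accI x)
    show ?case
    proof
      assume "\<exists>f. f 0 = x \<and> (\<forall>i. r (f i) (f (Suc i)))"
      then obtain f where "f 0 = x" "\<forall>i. r (f i) (f (Suc i))" by blast
      then have "r x (f (Suc 0))" and "\<forall>i. r ((f \<circ> Suc) i) ((f \<circ> Suc) (Suc i))"
        by auto
      with accI.IH show False by fastforce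
    qed
  qed
next
  assume no_chain: "\<not> (\<exists>f. f 0 = x \<and> (\<forall>i. r (f i) (f (Suc i))))"
  show "termip r x"
  proof (rule ccontr)
    assume nonterm: "\<not> termip r x"
    have step: "\<exists>z. r y z \<and> \<not> termip r z" if "\<not> termip r y" for y
      by (rule not_accp_down[OF that]) auto
    have "\<exists>f. \<forall>n. (\<not> termip r (f n) \<and> (n = 0 \<longrightarrow> f n = x)) \<and> r (f n) (f (Suc n))"
      by (rule dependent_nat_choice) (use nonterm step in blast)+
    with no_chain show False by blast
  qed
qed

lemma SN_iff_termip: "M \<in> SN \<longleftrightarrow> termip red M"
  by (simp add: SN_def termip_iff_no_infinite_chain)

lemma Var_in_SN: "Var x \<in> SN"
  unfolding SN_iff_termip by (rule accpI) (auto elim: red.cases)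

lemma termip_red_AppD: "termip red (App M N) \<Longrightarrow> termip red M"
proof (induction "App M N" arbitrary: M rule: accp.induct)
  case accI
  show ?case
    by (rule accpI) (use accI red.appL in blast)
qed

lemma SN_apps_head: "apps M Ls \<in> SN \<Longrightarrow> M \<in> SN"
  by (induction Ls arbitrary: M) (auto simp: apps_def SN_iff_termip dest: termip_red_AppD)

primrec var_headed :: "trm \<Rightarrow> bool" where
  "var_headed (Var x) = True"
| "var_headed (Lam M) = False"
| "var_headed (App M N) = var_headed M"
| "var_headed (Mu b M) = False"

lemma var_headed_apps [simp]: "var_headed (apps M Ls) = var_headed M"
  by (induction Ls arbitrary: M) (simp_all add: apps_def)

lemma red_var_headed: "red M N \<Longrightarrow> var_headed M \<Longrightarrow> var_headed N"
  by (induction rule: red.induct) simp_all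

lemma red_App_var_headed_cases:
  assumes "red (App A L) P" and "var_headed A"
  obtains A' where "red A A'" "P = App A' L" | L' where "red L L'" "P = App A L'"
  using assms by (cases rule: red.cases) auto

lemma termip_red_App_var_headed:
  assumes "termip red A" "var_headed A" "termip red L"
  shows "termip red (App A L)"
  using assms
proof (induction A arbitrary: L rule: accp.induct)
  case (accI A)
  note IH_head = accI.IH
  from \<open>termip red L\<close> \<open>var_headed A\<close> show ?case
  proof (induction L rule: accp.induct)
    case (accI L)
    show ?case
    proof (rule accpI)
      fix P assume "red\<inverse>\<inverse> P (App A L)"
      then have "red (App A L) P" by simp
      then show "termip red P"
      proof (rule red_App_var_headed_cases)
        show "var_headed A" by fact
      next
        fix A' assume "red A A'" "P = App A' L"
        moreover have "termip red L" by (rule accpI) (use accI.hyps in blast)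
        ultimately show ?thesis
          using IH_head red_var_headed \<open>var_headed A\<close> by blast
      next
        fix L' assume "red L L'" "P = App A L'"
        then show ?thesis using accI.IH \<open>var_headed A\<close> by blast
      qed
    qed
  qed
qed

lemma SN_apps_var_headed:
  "var_headed M \<Longrightarrow> M \<in> SN \<Longrightarrow> set Ls \<subseteq> SN \<Longrightarrow> apps M Ls \<in> SN"
  by (induction Ls arbitrary: M)
    (simp_all add: apps_def SN_iff_termip termip_red_App_var_headed)

lemma interp_Var_and_SN:
  "(\<forall>x. Var x \<in> interpD d) \<and> interpD d \<subseteq> SN"
  "(\<forall>\<^sub>F m in sequentially. replicate m (Var 0) \<in> interpC k) \<and> interpC k \<subseteq> SNstar"
proof (induction d and k)
  case Nu
  show ?case by (simp add: Var_in_SN)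
next
  case OmegaArr
  show ?case by (simp add: Var_in_SN)
next
  case (KArr k)
  then obtain m where "replicate m (Var 0) \<in> interpC k"
    using eventually_happens'[OF sequentially_bot] by blast
  then have "interpD (KArr k) \<subseteq> SN"
    using SN_apps_head by auto
  moreover have "Var x \<in> interpD (KArr k)" for x
    using KArr by (auto simp: SNstar_def Var_in_SN intro!: SN_apps_var_headed)
  ultimately show ?case by blast
next
  case (DAnd d1 d2)
  then show ?case by auto
next
  case (TimesOm d)
  have "\<forall>\<^sub>F m in sequentially. replicate m (Var 0) \<in> interpC (TimesOm d)"
    by (rule eventually_sequentially_Suc[THEN iffD1])
      (use TimesOm in \<open>auto simp: SNstar_def Var_in_SN intro!: always_eventually\<close>)
  moreover have "interpC (TimesOm d) \<subseteq> SNstar"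
    using TimesOm by (auto simp: SNstar_def)
  ultimately show ?case ..
next
  case (Times d k)
  have "\<forall>\<^sub>F m in sequentially. replicate m (Var 0) \<in> interpC (Times d k)"
    by (rule eventually_sequentially_Suc[THEN iffD1]) (use Times in \<open>auto elim!: eventually_mono\<close>)
  moreover have "interpC (Times d k) \<subseteq> SNstar"
    using Times by (fastforce simp: SNstar_def)
  ultimately show ?case ..
next
  case (CAnd k1 k2)
  then show ?case by (auto intro: eventually_conj)
qed

theorem mainTheorem10:
  shows "(\<forall>\<sigma> \<tau>. leD \<sigma> \<tau> \<longrightarrow> interpD \<sigma> \<subseteq> interpD \<tau>) \<and>
         (\<forall>\<sigma> \<tau>. leC \<sigma> \<tau> \<longrightarrow> interpC \<sigma> \<subseteq> interpC \<tau>)"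
proof -
  have "leD \<sigma> \<tau> \<Longrightarrow> interpD \<sigma> \<subseteq> interpD \<tau>" "leC \<kappa> \<kappa>' \<Longrightarrow> interpC \<kappa> \<subseteq> interpC \<kappa>'"
    for \<sigma> \<tau> \<kappa> \<kappa>'
  proof (induction rule: leD_leC.inducts)
    case (C_proj d1 d2)
    show ?case using interp_Var_and_SN(1)[of d2] by (auto simp: SNstar_def)
  qed auto
  then show ?thesis by blast
qed

end
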